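(* In the setting below, for all $a,b,c\in A$, $$\sum_{x\in M}\ell_a(x)\ell_b(x)\ell_c(x)=\begin{cases}-1 & a=b=c\in B,\\ 0&\text{otherwise.}\end{cases}$$
   Context: Let $q=2^l$ ($l\ge2$) and $\mathbb F_q$ the field with $q$ elements. Fix integers $k,m,s$ with $q/3\ge k\ge m\ge s>0$ and $2k\le q-m$. Fix $A\subseteq\mathbb F_q$ with $|A|=k$, $B\subseteq A$ with $|B|=s$, and let $M=\mathbb F_q\setminus B$. For $a\in A$, the Lagrange interpolation polynomial is $\ell_a(x)=\prod_{a'\in A\setminus\{a\}}\frac{x-a'}{a-a'}$. *)

theory Defs
  imports Main
begin

definition lagrange_basis :: "'a::field set \<Rightarrow> 'a \<Rightarrow> 'a \<Rightarrow> 'a" where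
  "lagrange_basis A a x = (\<Prod>a'\<in>A - {a}. (x - a') / (a - a'))"

end

theory Submission
  imports Defs "HOL-Computational_Algebra.Polynomial"
begin

text \<open>The product \<open>\<ell>\<^sub>a \<ell>\<^sub>b \<ell>\<^sub>c\<close> is a polynomial of degree at most \<open>3(k - 1) < q - 1\<close>,
  and over a finite field with \<open>q\<close> elements every power sum \<open>\<Sum>\<^sub>x x\<^sup>j\<close> with \<open>j < q - 1\<close>
  vanishes; hence the sum of the product over the whole field is \<open>0\<close>, and the sum over
  \<open>M\<close> is minus the sum over \<open>B\<close>. On the nodes the basis polynomials are indicators, so the
  sum over \<open>B\<close> is \<open>1\<close> exactly when \<open>a = b = c \<in> B\<close>.\<close>

lemma of_nat_card_UNIV_eq_0: "of_nat (card (UNIV :: 'a::{field,finite} set)) = (0::'a)"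
proof -
  have "(\<Sum>x\<in>UNIV. x) = (\<Sum>x\<in>UNIV. x + (1::'a))"
    by (rule sum.reindex_bij_witness[where j="\<lambda>x. x - 1" and i="\<lambda>x. x + 1"]) auto
  also have "\<dots> = (\<Sum>x\<in>UNIV. x) + of_nat (card (UNIV :: 'a set))"
    by (simp add: sum.distrib)
  finally show ?thesis by simp
qed

lemma sum_UNIV_power_eq_0:
  assumes "j + 1 < card (UNIV :: 'a::{field,finite} set)"
  shows "(\<Sum>x\<in>UNIV. (x::'a) ^ j) = 0"
proof (cases "j = 0")
  case True
  then show ?thesis using of_nat_card_UNIV_eq_0 by simp
next
  case False
  define p :: "'a poly" where "p = monom 1 j - 1"
  have "poly p 0 = -1"
    using False by (simp add: p_def poly_monom)
  then have "p \<noteq> 0"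
    by auto
  moreover have "degree p \<le> j"
    unfolding p_def by (intro degree_diff_le) (simp_all add: degree_monom_le)
  ultimately have "card {x. poly p x = 0} \<le> j"
    using card_poly_roots_bound[of p] by simp
  moreover have "card (UNIV - {0::'a}) = card (UNIV :: 'a set) - 1"
    by (simp add: card_Diff_subset)
  ultimately have "\<not> UNIV - {0} \<subseteq> {x. poly p x = 0}"
    using assms card_mono[of "{x. poly p x = 0}" "UNIV - {0::'a}"] by fastforce
  then obtain c :: 'a where c: "c \<noteq> 0" "c ^ j \<noteq> 1"
    unfolding p_def by (auto simp: poly_monom)
  \<comment> \<open>\<open>x \<mapsto> c x\<close> permutes the field and multiplies the power sum by \<open>c\<^sup>j \<noteq> 1\<close>.\<close>
  have "(\<Sum>x\<in>UNIV. x ^ j) = (\<Sum>x\<in>UNIV. (c * x) ^ j)"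
    by (rule sum.reindex_bij_witness[where j="\<lambda>x. x / c" and i="\<lambda>x. c * x"]) (use c in auto)
  also have "\<dots> = c ^ j * (\<Sum>x\<in>UNIV. x ^ j)"
    by (simp add: power_mult_distrib sum_distrib_left)
  finally have "(c ^ j - 1) * (\<Sum>x\<in>UNIV. x ^ j) = 0"
    by (simp add: algebra_simps)
  then show ?thesis using c by simp
qed

lemma sum_UNIV_poly_eq_0:
  fixes p :: "'a::{field,finite} poly"
  assumes "degree p + 1 < card (UNIV :: 'a set)"
  shows "(\<Sum>x\<in>UNIV. poly p x) = 0"
proof -
  have "(\<Sum>x\<in>UNIV. poly p x) = (\<Sum>i\<le>degree p. coeff p i * (\<Sum>x\<in>UNIV. x ^ i))"
    by (simp add: poly_altdef sum_distrib_left sum.swap[where A = UNIV])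
  also have "\<dots> = 0"
    using assms by (intro sum.neutral) (simp add: sum_UNIV_power_eq_0)
  finally show ?thesis .
qed

lemma sum_Compl_poly_eq_neg_sum:
  fixes p :: "'a::{field,finite} poly"
  assumes "degree p + 1 < card (UNIV :: 'a set)"
  shows "(\<Sum>x\<in>UNIV - B. poly p x) = - (\<Sum>x\<in>B. poly p x)"
  using sum_UNIV_poly_eq_0[OF assms] sum.subset_diff[of B UNIV "poly p"]
  by (simp add: eq_neg_iff_add_eq_0)

definition lagrange_poly :: "'a::field set \<Rightarrow> 'a \<Rightarrow> 'a poly" where
  "lagrange_poly A a = smult (inverse (\<Prod>a'\<in>A - {a}. a - a')) (\<Prod>a'\<in>A - {a}. [:-a', 1:])"

lemma poly_lagrange_poly: "poly (lagrange_poly A a) x = lagrange_basis A a x"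
  unfolding lagrange_poly_def lagrange_basis_def prod_dividef
  by (simp add: poly_prod divide_inverse mult.commute)

lemma degree_lagrange_poly:
  assumes "finite A" "a \<in> A"
  shows "degree (lagrange_poly A a) \<le> card A - 1"
proof -
  have "degree (lagrange_poly A a) \<le> degree (\<Prod>a'\<in>A - {a}. [:-a', 1:])"
    unfolding lagrange_poly_def by simp
  also have "\<dots> \<le> (\<Sum>a'\<in>A - {a}. degree [:-a', 1:])"
    using degree_prod_sum_le[of "A - {a}" "\<lambda>a'. [:-a', 1:]"] assms by (simp add: o_def)
  also have "\<dots> = card A - 1"
    using assms by simp
  finally show ?thesis .
qed

lemma lagrange_basis_node:
  assumes "finite A" "x \<in> A" "a \<in> A"
  shows "lagrange_basis A a x = (if x = a then 1 else 0)"
  unfolding lagrange_basis_def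
  using assms by (auto intro!: prod.neutral prod_zero bexI[where x = x])

lemma sum_lagrange_basis_triple_nodes:
  assumes "finite A" "B \<subseteq> A" "a \<in> A" "b \<in> A" "c \<in> A"
  shows "(\<Sum>x\<in>B. lagrange_basis A a x * lagrange_basis A b x * lagrange_basis A c x)
           = (if a = b \<and> b = c \<and> a \<in> B then 1 else 0)"
proof -
  have "(\<Sum>x\<in>B. lagrange_basis A a x * lagrange_basis A b x * lagrange_basis A c x)
          = (\<Sum>x\<in>B. if x = a \<and> x = b \<and> x = c then 1 else 0)"
    using assms by (intro sum.cong) (auto simp: lagrange_basis_node subset_iff)
  also have "\<dots> = (if a = b \<and> b = c \<and> a \<in> B then 1 else 0)"
    using assms(1,2) finite_subset[of B A] by (auto intro!: sum.neutral simp: sum.delta')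
  finally show ?thesis .
qed

lemma sum_Compl_lagrange_basis_triple:
  fixes A B :: "'a::{field,finite} set"
  assumes "3 * card A \<le> card (UNIV :: 'a set)" "B \<subseteq> A" "a \<in> A" "b \<in> A" "c \<in> A"
  shows "(\<Sum>x\<in>UNIV - B. lagrange_basis A a x * lagrange_basis A b x * lagrange_basis A c x)
           = (if a = b \<and> b = c \<and> a \<in> B then -1 else 0)"
proof -
  define p where "p = lagrange_poly A a * lagrange_poly A b * lagrange_poly A c"
  have "degree p \<le> degree (lagrange_poly A a) + degree (lagrange_poly A b) + degree (lagrange_poly A c)"
    unfolding p_def by (meson add_le_mono degree_mult_le le_trans order_refl)
  also have "\<dots> \<le> 3 * (card A - 1)"
    using degree_lagrange_poly[OF finite assms(3)] degree_lagrange_poly[OF finite assms(4)]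
      degree_lagrange_poly[OF finite assms(5)] by linarith
  finally have "degree p \<le> 3 * (card A - 1)" .
  moreover have "card A > 0"
    using assms(3) by (auto simp: card_gt_0_iff)
  ultimately have "degree p + 1 < card (UNIV :: 'a set)"
    using assms(1) by linarith
  then have "(\<Sum>x\<in>UNIV - B. poly p x) = - (\<Sum>x\<in>B. poly p x)"
    by (rule sum_Compl_poly_eq_neg_sum)
  then show ?thesis
    using sum_lagrange_basis_triple_nodes[OF finite assms(2-5)]
    by (auto simp: p_def poly_lagrange_poly)
qed

theorem lemma5p8:
  fixes A B M :: "'a::{field,finite} set"
    and l k m s :: nat
  assumes q: "card (UNIV :: 'a set) = 2 ^ l" and l: "l \<ge> 2"
    and kq: "3 * k \<le> card (UNIV :: 'a set)"
    and km: "k \<ge> m" and ms: "m \<ge> s" and s: "s > 0"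
    and k2: "2 * k \<le> card (UNIV :: 'a set) - m"
    and A: "card A = k"
    and B: "B \<subseteq> A" "card B = s"
    and M: "M = UNIV - B"
    and abc: "a \<in> A" "b \<in> A" "c \<in> A"
  shows "(\<Sum>x\<in>M. lagrange_basis A a x * lagrange_basis A b x * lagrange_basis A c x)
           = (if a = b \<and> b = c \<and> a \<in> B then -1 else 0)"
  using sum_Compl_lagrange_basis_triple[of A B a b c] kq A B(1) M abc by simp

end
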